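(* Let $r\ge2$ and for $i=1,\ldots,r$ let $\mathcal{A}_i=t_i\,\mathbf a_i\otimes\mathbf b_i\otimes\mathbf c_i\in\mathbb{R}^{m_1\times m_2\times m_3}$ be rank-1 tensors with $t_i\in\mathbb{R}\setminus\{0\}$ and $\|\mathbf a_i\|=\|\mathbf b_i\|=\|\mathbf c_i\|=1$. Then \[\kappa(\mathcal{A}_1,\ldots,\mathcal{A}_r)\ge\max_{1\le i\ne j\le r}\frac{1}{\sqrt{1-|\langle\mathbf c_i,\mathbf c_j\rangle|}}\] (with the right-hand side interpreted as $\infty$ if some $|\langle\mathbf c_i,\mathbf c_j\rangle|=1$).
   Context: $\mathcal{S}$ denotes the manifold of rank-1 tensors in $\mathbb{R}^{m_1\times m_2\times m_3}$. The condition number is $\kappa(\mathcal{A}_1,\ldots,\mathcal{A}_r)=1/\varsigma_{\min}([U_1\ \cdots\ U_r])$, where $U_i$ is a matrix whose columns form an orthonormal basis of the tangent space $T_{\mathcal{A}_i}\mathcal{S}\subset\mathbb{R}^{m_1m_2m_3}$ and $\varsigma_{\min}$ denotes the smallest singular value ($\kappa=\infty$ if it is zero). $\langle\cdot,\cdot\rangle$ is the Euclidean inner product. *)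

theory Defs
  imports "HOL-Analysis.Analysis" "HOL-Library.Extended_Real"
begin

type_synonym ('a,'b,'c) tensor3 = "real ^ ('a \<times> 'b \<times> 'c)"

text \<open>The outer product a (x) b (x) c in R^{m1 x m2 x m3}; the dimensions are the
  cardinalities of the finite index types.\<close>
definition outer3 :: "real^'a \<Rightarrow> real^'b \<Rightarrow> real^'c \<Rightarrow> ('a::finite,'b::finite,'c::finite) tensor3" where
  "outer3 a b c = (\<chi> p. a $ fst p * b $ fst (snd p) * c $ snd (snd p))"

definition rank1_tensors :: "('a::finite,'b::finite,'c::finite) tensor3 set" where
  "rank1_tensors = {outer3 a b c | a b c. outer3 a b c \<noteq> 0}"

definition tangent_space :: "('a::finite,'b::finite,'c::finite) tensor3 \<Rightarrow> ('a,'b,'c) tensor3 set" where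
  "tangent_space A = {v. \<exists>\<gamma>. \<gamma> 0 = A \<and> (\<forall>\<^sub>F s in nhds 0. \<gamma> s \<in> rank1_tensors)
                            \<and> (\<gamma> has_vector_derivative v) (at 0)}"

definition orthonormal_basis_of :: "'v::real_inner set \<Rightarrow> 'v set \<Rightarrow> bool" where
  "orthonormal_basis_of U T \<longleftrightarrow> finite U \<and> (\<forall>u\<in>U. norm u = 1) \<and> pairwise orthogonal U
      \<and> span U = T"

text \<open>Smallest singular value of the matrix [U_1 ... U_r] whose columns are indexed by
  pairs (i,u) with 1 \<le> i \<le> r and u \<in> U i: min of ||Mx|| over unit vectors x.\<close>
definition sigma_min_blocks :: "nat \<Rightarrow> (nat \<Rightarrow> 'v::real_inner set) \<Rightarrow> real" where
  "sigma_min_blocks r U = Inf {norm (\<Sum>p\<in>Sigma {1..r} U. x p *\<^sub>R snd p) | x.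
        (\<Sum>p\<in>Sigma {1..r} U. (x p)\<^sup>2) = 1}"

definition cond_number :: "nat \<Rightarrow> (nat \<Rightarrow> 'v::real_inner set) \<Rightarrow> ereal" where
  "cond_number r U = (if sigma_min_blocks r U = 0 then \<infinity> else ereal (1 / sigma_min_blocks r U))"

end

theory Submission
  imports Defs
begin

text \<open>
  Perturbing the first factor of \<open>A\<^sub>i\<close> shows that \<open>u = a\<^sub>j \<otimes> b\<^sub>i \<otimes> c\<^sub>i\<close> is tangent to
  \<open>S\<close> at \<open>A\<^sub>i\<close>, and perturbing the second factor of \<open>A\<^sub>j\<close> shows that
  \<open>v = a\<^sub>j \<otimes> (\<plusminus>b\<^sub>i) \<otimes> c\<^sub>j\<close> is tangent at \<open>A\<^sub>j\<close>; with the sign of \<open>c\<^sub>i \<bullet> c\<^sub>j\<close> both are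
  unit tensors with \<open>u \<bullet> v = \<bar>c\<^sub>i \<bullet> c\<^sub>j\<bar>\<close>. Expanding \<open>u\<close> and \<open>-v\<close> in the orthonormal bases
  \<open>U\<^sub>i\<close> and \<open>U\<^sub>j\<close> gives a unit coefficient vector that \<open>[U\<^sub>1 \<dots> U\<^sub>r]\<close> maps to
  \<open>(u - v) / \<surd>2\<close>, of norm \<open>\<surd>(1 - \<bar>c\<^sub>i \<bullet> c\<^sub>j\<bar>)\<close>; this bounds the smallest singular value.
\<close>

lemma inner_outer3: "outer3 a b c \<bullet> outer3 x y z = (a \<bullet> x) * (b \<bullet> y) * (c \<bullet> z)"
proof -
  have bc: "(b \<bullet> y) * (c \<bullet> z) = (\<Sum>(j, k)\<in>UNIV. (b $ j * y $ j) * (c $ k * z $ k))"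
    by (simp add: inner_vec_def sum_product sum.cartesian_product)
  have "outer3 a b c \<bullet> outer3 x y z
      = (\<Sum>i\<in>UNIV. \<Sum>(j, k)\<in>UNIV. (a $ i * x $ i) * ((b $ j * y $ j) * (c $ k * z $ k)))"
    by (simp add: outer3_def inner_vec_def sum.cartesian_product mult_ac split_def)
  also have "\<dots> = (a \<bullet> x) * ((b \<bullet> y) * (c \<bullet> z))"
    unfolding bc by (simp add: inner_vec_def sum_product case_prod_unfold)
  finally show ?thesis
    by (simp add: mult.assoc)
qed

lemma norm_outer3: "norm (outer3 a b c) = norm a * norm b * norm c"
  by (simp add: norm_eq_sqrt_inner inner_outer3 real_sqrt_mult)

lemma outer3_add_left: "outer3 (x + y) b c = outer3 x b c + outer3 y b c"
  by (simp add: outer3_def vec_eq_iff algebra_simps)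

lemma outer3_scaleR_left: "outer3 (s *\<^sub>R x) b c = s *\<^sub>R outer3 x b c"
  by (simp add: outer3_def vec_eq_iff)

lemma outer3_add_middle: "outer3 a (x + y) c = outer3 a x c + outer3 a y c"
  by (simp add: outer3_def vec_eq_iff algebra_simps)

lemma outer3_scaleR_middle: "outer3 a (s *\<^sub>R y) c = s *\<^sub>R outer3 a y c"
  by (simp add: outer3_def vec_eq_iff algebra_simps)

lemma line_in_rank1_tensors_imp_tangent:
  assumes "A \<noteq> 0"
    and "\<And>s. A + s *\<^sub>R V \<noteq> 0 \<Longrightarrow> A + s *\<^sub>R V \<in> rank1_tensors"
  shows "V \<in> tangent_space A"
  unfolding tangent_space_def
proof (intro CollectI exI conjI)
  let ?\<gamma> = "\<lambda>s. A + s *\<^sub>R V"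
  show "?\<gamma> 0 = A"
    by simp
  have "(?\<gamma> \<longlongrightarrow> A) (at 0)"
    by (auto intro!: tendsto_eq_intros)
  then have "\<forall>\<^sub>F s in at 0. ?\<gamma> s \<noteq> 0"
    using assms(1) by (rule tendsto_imp_eventually_ne)
  then have "\<forall>\<^sub>F s in nhds 0. ?\<gamma> s \<noteq> 0"
    using assms(1) by (simp add: eventually_nhds_conv_at)
  then show "\<forall>\<^sub>F s in nhds 0. ?\<gamma> s \<in> rank1_tensors"
    by eventually_elim (rule assms(2))
  show "(?\<gamma> has_vector_derivative V) (at 0)"
    by (auto intro!: derivative_eq_intros)
qed

lemma outer3_left_in_tangent_space:
  assumes "t *\<^sub>R outer3 a b c \<noteq> 0"
  shows "outer3 x b c \<in> tangent_space (t *\<^sub>R outer3 a b c)"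
proof (rule line_in_rank1_tensors_imp_tangent[OF assms])
  fix s
  have "t *\<^sub>R outer3 a b c + s *\<^sub>R outer3 x b c = outer3 (t *\<^sub>R a + s *\<^sub>R x) b c"
    by (simp add: outer3_add_left outer3_scaleR_left)
  then show "t *\<^sub>R outer3 a b c + s *\<^sub>R outer3 x b c \<noteq> 0 \<Longrightarrow>
      t *\<^sub>R outer3 a b c + s *\<^sub>R outer3 x b c \<in> rank1_tensors"
    by (auto simp: rank1_tensors_def)
qed

lemma outer3_middle_in_tangent_space:
  assumes "t *\<^sub>R outer3 a b c \<noteq> 0"
  shows "outer3 a y c \<in> tangent_space (t *\<^sub>R outer3 a b c)"
proof (rule line_in_rank1_tensors_imp_tangent[OF assms])
  fix s
  have "t *\<^sub>R outer3 a b c + s *\<^sub>R outer3 a y c = outer3 a (t *\<^sub>R b + s *\<^sub>R y) c"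
    by (simp add: outer3_add_middle outer3_scaleR_middle)
  then show "t *\<^sub>R outer3 a b c + s *\<^sub>R outer3 a y c \<noteq> 0 \<Longrightarrow>
      t *\<^sub>R outer3 a b c + s *\<^sub>R outer3 a y c \<in> rank1_tensors"
    by (auto simp: rank1_tensors_def)
qed

lemma scaleR_outer3_neq_0:
  assumes "t \<noteq> 0" "a \<noteq> 0" "b \<noteq> 0" "c \<noteq> 0"
  shows "t *\<^sub>R outer3 a b c \<noteq> 0"
proof -
  have "norm (t *\<^sub>R outer3 a b c) \<noteq> 0"
    using assms by (simp add: norm_outer3)
  then show ?thesis
    by (metis norm_zero)
qed

lemma tangent_unit_pair_inner_abs:
  assumes "t *\<^sub>R outer3 a b c \<noteq> 0" "t' *\<^sub>R outer3 a' b' c' \<noteq> 0"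
    and "norm a' = 1" "norm b = 1" "norm c = 1" "norm c' = 1"
  obtains u v where "u \<in> tangent_space (t *\<^sub>R outer3 a b c)"
    and "v \<in> tangent_space (t' *\<^sub>R outer3 a' b' c')"
    and "norm u = 1" "norm v = 1" "u \<bullet> v = \<bar>c \<bullet> c'\<bar>"
proof
  define \<sigma> :: real where "\<sigma> = (if c \<bullet> c' \<ge> 0 then 1 else -1)"
  show "outer3 a' b c \<in> tangent_space (t *\<^sub>R outer3 a b c)"
    by (rule outer3_left_in_tangent_space[OF assms(1)])
  show "outer3 a' (\<sigma> *\<^sub>R b) c' \<in> tangent_space (t' *\<^sub>R outer3 a' b' c')"
    by (rule outer3_middle_in_tangent_space[OF assms(2)])
  show "norm (outer3 a' b c) = 1" "norm (outer3 a' (\<sigma> *\<^sub>R b) c') = 1"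
    using assms(3-6) by (simp_all add: norm_outer3 \<sigma>_def)
  show "outer3 a' b c \<bullet> outer3 a' (\<sigma> *\<^sub>R b) c' = \<bar>c \<bullet> c'\<bar>"
    using assms(3,4) by (simp add: inner_outer3 \<sigma>_def norm_eq_1)
qed

lemma norm_sum_orthonormal_squared:
  fixes U :: "'v::real_inner set"
  assumes "finite U" "pairwise orthogonal U" "\<And>e. e \<in> U \<Longrightarrow> norm e = 1"
  shows "(norm (\<Sum>e\<in>U. \<alpha> e *\<^sub>R e))\<^sup>2 = (\<Sum>e\<in>U. (\<alpha> e)\<^sup>2)"
proof -
  have coordinate: "(\<Sum>f\<in>U. \<alpha> f * (e \<bullet> f)) = \<alpha> e" if "e \<in> U" for e
  proof -
    have "(\<Sum>f\<in>U. \<alpha> f * (e \<bullet> f)) = \<alpha> e * (e \<bullet> e) + (\<Sum>f\<in>U - {e}. \<alpha> f * (e \<bullet> f))"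
      using assms(1) that by (simp add: sum.remove)
    also have "(\<Sum>f\<in>U - {e}. \<alpha> f * (e \<bullet> f)) = 0"
      using assms(2) that by (intro sum.neutral) (auto simp: pairwise_def orthogonal_def)
    finally show ?thesis
      using assms(3)[OF that] by (simp add: norm_eq_1)
  qed
  have "(norm (\<Sum>e\<in>U. \<alpha> e *\<^sub>R e))\<^sup>2 = (\<Sum>e\<in>U. \<alpha> e * (\<Sum>f\<in>U. \<alpha> f * (e \<bullet> f)))"
    by (simp add: power2_norm_eq_inner inner_sum_left inner_sum_right sum_distrib_left
        algebra_simps inner_commute)
  also have "\<dots> = (\<Sum>e\<in>U. (\<alpha> e)\<^sup>2)"
    by (rule sum.cong) (auto simp: coordinate power2_eq_square)
  finally show ?thesis .
qed

lemma orthonormal_basis_of_expansion: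
  assumes "orthonormal_basis_of U T" "u \<in> T"
  obtains \<alpha> where "u = (\<Sum>e\<in>U. \<alpha> e *\<^sub>R e)" "(\<Sum>e\<in>U. (\<alpha> e)\<^sup>2) = (norm u)\<^sup>2"
proof -
  have U: "finite U" "pairwise orthogonal U" "\<And>e. e \<in> U \<Longrightarrow> norm e = 1" "span U = T"
    using assms(1) unfolding orthonormal_basis_of_def by auto
  obtain \<alpha> where "u = (\<Sum>e\<in>U. \<alpha> e *\<^sub>R e)"
    using assms(2) U(1,4) span_finite by auto
  with norm_sum_orthonormal_squared[OF U(1-3)] that show thesis
    by metis
qed

lemma sum_Sigma_if_fst_eq:
  assumes "finite A" "\<forall>k\<in>A. finite (B k)" "i \<in> A"
  shows "(\<Sum>p\<in>Sigma A B. if fst p = i then F (snd p) else 0) = (\<Sum>e\<in>B i. F e)"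
proof -
  have "(\<Sum>p\<in>Sigma A B. if fst p = i then F (snd p) else 0)
      = (\<Sum>k\<in>A. \<Sum>e\<in>B k. if k = i then F e else 0)"
    using assms(1,2) by (simp add: sum.Sigma split_def)
  also have "\<dots> = (\<Sum>k\<in>A. if k = i then (\<Sum>e\<in>B i. F e) else 0)"
    by (rule sum.cong) auto
  also have "\<dots> = (\<Sum>e\<in>B i. F e)"
    using assms(1,3) by simp
  finally show ?thesis .
qed

lemma block_difference_coefficients:
  fixes U :: "nat \<Rightarrow> 'v::real_inner set"
  assumes i: "i \<in> {1..r}" and j: "j \<in> {1..r}" and "i \<noteq> j"
    and onb: "\<forall>k\<in>{1..r}. orthonormal_basis_of (U k) (T k)"
    and "u \<in> T i" "v \<in> T j" "norm u = 1" "norm v = 1"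
  obtains x where "(\<Sum>p\<in>Sigma {1..r} U. (x p)\<^sup>2) = 1"
    and "(\<Sum>p\<in>Sigma {1..r} U. x p *\<^sub>R snd p) = (1 / sqrt 2) *\<^sub>R (u - v)"
proof -
  obtain \<alpha> where \<alpha>: "u = (\<Sum>e\<in>U i. \<alpha> e *\<^sub>R e)" "(\<Sum>e\<in>U i. (\<alpha> e)\<^sup>2) = (norm u)\<^sup>2"
    by (rule orthonormal_basis_of_expansion[OF bspec[OF onb i] \<open>u \<in> T i\<close>])
  obtain \<beta> where \<beta>: "v = (\<Sum>e\<in>U j. \<beta> e *\<^sub>R e)" "(\<Sum>e\<in>U j. (\<beta> e)\<^sup>2) = (norm v)\<^sup>2"
    by (rule orthonormal_basis_of_expansion[OF bspec[OF onb j] \<open>v \<in> T j\<close>])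
  define x where "x p = (if fst p = i then \<alpha> (snd p) / sqrt 2 else 0)
    + (if fst p = j then - \<beta> (snd p) / sqrt 2 else 0)" for p
  have fin: "finite {1..r}" "\<forall>k\<in>{1..r}. finite (U k)"
    using onb by (auto simp: orthonormal_basis_of_def)
  note block_sum = sum_Sigma_if_fst_eq[OF fin]
  have "(\<Sum>p\<in>Sigma {1..r} U. (x p)\<^sup>2)
      = (\<Sum>p\<in>Sigma {1..r} U. if fst p = i then (\<alpha> (snd p))\<^sup>2 / 2 else 0)
      + (\<Sum>p\<in>Sigma {1..r} U. if fst p = j then (\<beta> (snd p))\<^sup>2 / 2 else 0)"
    unfolding sum.distrib[symmetric]
    by (rule sum.cong) (use \<open>i \<noteq> j\<close> in \<open>auto simp: x_def power_divide\<close>)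
  also have "\<dots> = 1"
    using block_sum[OF i, where F = "\<lambda>e. (\<alpha> e)\<^sup>2 / 2"]
      block_sum[OF j, where F = "\<lambda>e. (\<beta> e)\<^sup>2 / 2"]
      \<alpha>(2) \<beta>(2) \<open>norm u = 1\<close> \<open>norm v = 1\<close>
    by (simp add: sum_divide_distrib[symmetric])
  finally have unit_x: "(\<Sum>p\<in>Sigma {1..r} U. (x p)\<^sup>2) = 1" .
  have "(\<Sum>p\<in>Sigma {1..r} U. x p *\<^sub>R snd p)
      = (\<Sum>p\<in>Sigma {1..r} U. if fst p = i then (\<alpha> (snd p) / sqrt 2) *\<^sub>R snd p else 0)
      + (\<Sum>p\<in>Sigma {1..r} U. if fst p = j then (- \<beta> (snd p) / sqrt 2) *\<^sub>R snd p else 0)"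
    unfolding sum.distrib[symmetric] by (rule sum.cong) (auto simp: x_def scaleR_add_left)
  also have "\<dots> = (1 / sqrt 2) *\<^sub>R (u - v)"
    using block_sum[OF i, where F = "\<lambda>e. (\<alpha> e / sqrt 2) *\<^sub>R e"]
      block_sum[OF j, where F = "\<lambda>e. (- \<beta> e / sqrt 2) *\<^sub>R e"]
    unfolding \<alpha>(1) \<beta>(1) by (simp add: scaleR_diff_right scaleR_sum_right sum_negf)
  finally show thesis
    using that unit_x by blast
qed

lemma sigma_min_blocks_le_norm:
  fixes U :: "nat \<Rightarrow> 'v::real_inner set" and x :: "nat \<times> 'v \<Rightarrow> real"
  assumes "(\<Sum>p\<in>Sigma {1..r} U. (x p)\<^sup>2) = 1"
  shows "sigma_min_blocks r U \<le> norm (\<Sum>p\<in>Sigma {1..r} U. x p *\<^sub>R snd p)"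
  unfolding sigma_min_blocks_def
  by (rule cInf_lower) (use assms in \<open>auto intro: bdd_belowI[of _ 0]\<close>)

lemma sigma_min_blocks_nonneg:
  fixes U :: "nat \<Rightarrow> 'v::real_inner set" and x :: "nat \<times> 'v \<Rightarrow> real"
  assumes "(\<Sum>p\<in>Sigma {1..r} U. (x p)\<^sup>2) = 1"
  shows "0 \<le> sigma_min_blocks r U"
  unfolding sigma_min_blocks_def
  by (rule cInf_greatest) (use assms in auto)

lemma norm_scaled_diff_of_unit_vectors:
  fixes u v :: "'v::real_inner"
  assumes "norm u = 1" "norm v = 1"
  shows "norm ((1 / sqrt 2) *\<^sub>R (u - v)) = sqrt (1 - u \<bullet> v)"
proof -
  have "(norm ((1 / sqrt 2) *\<^sub>R (u - v)))\<^sup>2 = (u - v) \<bullet> (u - v) / 2"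
    by (simp add: power_mult_distrib power2_norm_eq_inner power_divide)
  also have "\<dots> = 1 - u \<bullet> v"
    using assms by (simp add: inner_diff_left inner_diff_right inner_commute[of v u] norm_eq_1)
  finally show ?thesis
    by (metis norm_ge_zero real_sqrt_unique)
qed

lemma cond_number_ge_if_sigma_min_blocks_le:
  assumes "0 \<le> sigma_min_blocks r U" "sigma_min_blocks r U \<le> s"
  shows "(if s = 0 then \<infinity> else ereal (1 / s)) \<le> cond_number r U"
proof (cases "sigma_min_blocks r U = 0")
  case False
  with assms have "0 < sigma_min_blocks r U"
    by simp
  with assms(2) have "1 / s \<le> 1 / sigma_min_blocks r U"
    by (simp add: frac_le)
  with False assms show ?thesis
    by (simp add: cond_number_def)
qed (simp add: cond_number_def)

theorem lemma3p1:
  fixes r :: nat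
    and t :: "nat \<Rightarrow> real"
    and a :: "nat \<Rightarrow> real^'a::finite" and b :: "nat \<Rightarrow> real^'b::finite" and c :: "nat \<Rightarrow> real^'c::finite"
    and U :: "nat \<Rightarrow> ('a,'b,'c) tensor3 set"
  assumes "r \<ge> 2"
    and "\<And>i. i \<in> {1..r} \<Longrightarrow> t i \<noteq> 0"
    and "\<And>i. i \<in> {1..r} \<Longrightarrow> norm (a i) = 1 \<and> norm (b i) = 1 \<and> norm (c i) = 1"
    and "\<And>i. i \<in> {1..r} \<Longrightarrow>
           orthonormal_basis_of (U i) (tangent_space (t i *\<^sub>R outer3 (a i) (b i) (c i)))"
  shows "\<forall>i\<in>{1..r}. \<forall>j\<in>{1..r}. i \<noteq> j \<longrightarrow>
           cond_number r U \<ge>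
             (if \<bar>c i \<bullet> c j\<bar> = 1 then \<infinity>
              else ereal (1 / sqrt (1 - \<bar>c i \<bullet> c j\<bar>)))"
proof (intro ballI impI)
  fix i j assume i: "i \<in> {1..r}" and j: "j \<in> {1..r}" and "i \<noteq> j"
  note unit = assms(3)[OF i] assms(3)[OF j]
  define T where "T k = tangent_space (t k *\<^sub>R outer3 (a k) (b k) (c k))" for k
  have nonzero: "t k *\<^sub>R outer3 (a k) (b k) (c k) \<noteq> 0" if "k \<in> {1..r}" for k
    using assms(2,3)[OF that] by (intro scaleR_outer3_neq_0) auto
  have onb: "\<forall>k\<in>{1..r}. orthonormal_basis_of (U k) (T k)"
    using assms(4) by (simp add: T_def)
  obtain u v where u: "u \<in> T i" and v: "v \<in> T j" and norms: "norm u = 1" "norm v = 1"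
    and uv: "u \<bullet> v = \<bar>c i \<bullet> c j\<bar>"
    using tangent_unit_pair_inner_abs[OF nonzero[OF i] nonzero[OF j]] unit unfolding T_def by metis
  obtain x where unit_x: "(\<Sum>p\<in>Sigma {1..r} U. (x p)\<^sup>2) = 1"
    and image_x: "(\<Sum>p\<in>Sigma {1..r} U. x p *\<^sub>R snd p) = (1 / sqrt 2) *\<^sub>R (u - v)"
    using block_difference_coefficients[OF i j \<open>i \<noteq> j\<close> onb u v norms] by blast
  from uv have "sigma_min_blocks r U \<le> sqrt (1 - \<bar>c i \<bullet> c j\<bar>)"
    using sigma_min_blocks_le_norm[OF unit_x] image_x
      norm_scaled_diff_of_unit_vectors[OF norms] by simp
  with sigma_min_blocks_nonneg[OF unit_x]
  have "(if sqrt (1 - \<bar>c i \<bullet> c j\<bar>) = 0 then \<infinity> else ereal (1 / sqrt (1 - \<bar>c i \<bullet> c j\<bar>)))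
      \<le> cond_number r U"
    by (rule cond_number_ge_if_sigma_min_blocks_le)
  moreover have "sqrt (1 - \<bar>c i \<bullet> c j\<bar>) = 0 \<longleftrightarrow> \<bar>c i \<bullet> c j\<bar> = 1"
    using Cauchy_Schwarz_ineq2[of "c i" "c j"] unit by auto
  ultimately show "cond_number r U \<ge> (if \<bar>c i \<bullet> c j\<bar> = 1 then \<infinity>
      else ereal (1 / sqrt (1 - \<bar>c i \<bullet> c j\<bar>)))"
    by (simp only:)
qed

end
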